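(* Let $G$ be a graph such that three or more edges join vertices $v$ and $w$. If $e$ is one of these edges, then $\lfloor \mathrm{sp}\rfloor(G\backslash e)=\lfloor \mathrm{sp}\rfloor(G)$.
   Context: All graphs are finite, have at least one vertex, have no loops, and may have multiple (parallel) edges. $G\backslash e$ denotes deletion of edge $e$. A unique shortest path is a shortest $u$–$v$ path $P$ such that every $u$–$v$ path with the same number of vertices is identical to $P$, where two paths with different edge sequences are different even if their vertex sequences agree; a single vertex is a unique shortest path. The parade number $\mathrm{usp}(G)$ is the largest number of vertices of a unique shortest path in $G$. The spectator number is $\mathrm{sp}(G)=|V(G)|-\mathrm{usp}(G)$. A minor of $H$ is any graph obtained from $H$ by a sequence of: deleting an isolated vertex, deleting an edge, contracting an edge that has no edge parallel to it. The spectator floor $\lfloor \mathrm{sp}\rfloor(G)$ is the minimum of $\mathrm{sp}(H)$ over all graphs $H$ of which $G$ is a minor. *)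

theory Defs
  imports Main
begin

text \<open>Finite multigraphs without loops. Vertices and edges are labelled by natural
numbers; every finite graph is isomorphic to one of this form.\<close>

record graph =
  verts :: "nat set"
  edges :: "nat set"
  ends  :: "nat \<Rightarrow> nat set"

definition wf_graph :: "graph \<Rightarrow> bool" where
  "wf_graph G \<longleftrightarrow> finite (verts G) \<and> verts G \<noteq> {} \<and> finite (edges G) \<and>
     (\<forall>e\<in>edges G. card (ends G e) = 2 \<and> ends G e \<subseteq> verts G)"

definition delete_edge :: "graph \<Rightarrow> nat \<Rightarrow> graph" where
  "delete_edge G e = G\<lparr>edges := edges G - {e}\<rparr>"

definition is_path :: "graph \<Rightarrow> nat \<Rightarrow> nat \<Rightarrow> nat list \<Rightarrow> nat list \<Rightarrow> bool" where
  "is_path G u v vs es \<longleftrightarrow> length vs = Suc (length es) \<and> distinct vs \<and>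
     set vs \<subseteq> verts G \<and> set es \<subseteq> edges G \<and> hd vs = u \<and> last vs = v \<and>
     (\<forall>i<length es. ends G (es ! i) = {vs ! i, vs ! Suc i})"

definition unique_shortest_path :: "graph \<Rightarrow> nat list \<Rightarrow> nat list \<Rightarrow> bool" where
  "unique_shortest_path G vs es \<longleftrightarrow> (\<exists>u v. is_path G u v vs es \<and>
     (\<forall>vs' es'. is_path G u v vs' es' \<longrightarrow> length vs \<le> length vs') \<and>
     (\<forall>vs' es'. is_path G u v vs' es' \<and> length vs' = length vs \<longrightarrow> vs' = vs \<and> es' = es))"

definition usp :: "graph \<Rightarrow> nat" where
  "usp G = Max {length vs | vs es. unique_shortest_path G vs es}"

definition sp :: "graph \<Rightarrow> nat" where
  "sp G = card (verts G) - usp G"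

definition graph_iso :: "graph \<Rightarrow> graph \<Rightarrow> bool" where
  "graph_iso G H \<longleftrightarrow> (\<exists>f g. bij_betw f (verts G) (verts H) \<and> bij_betw g (edges G) (edges H) \<and>
     (\<forall>e\<in>edges G. ends H (g e) = f ` ends G e))"

inductive minor_step :: "graph \<Rightarrow> graph \<Rightarrow> bool" where
  del_vertex: "\<lbrakk>x \<in> verts H; \<forall>e\<in>edges H. x \<notin> ends H e\<rbrakk>
     \<Longrightarrow> minor_step H (H\<lparr>verts := verts H - {x}\<rparr>)"
| del_edge: "e \<in> edges H \<Longrightarrow> minor_step H (delete_edge H e)"
| contract: "\<lbrakk>e \<in> edges H; ends H e = {a, b}; a \<noteq> b;
     \<forall>e'\<in>edges H. e' \<noteq> e \<longrightarrow> ends H e' \<noteq> ends H e\<rbrakk>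
     \<Longrightarrow> minor_step H \<lparr>verts = verts H - {b}, edges = edges H - {e},
           ends = (\<lambda>f. (\<lambda>x. if x = b then a else x) ` ends H f)\<rparr>"

definition is_minor :: "graph \<Rightarrow> graph \<Rightarrow> bool" where
  "is_minor G H \<longleftrightarrow> (\<exists>H'. minor_step\<^sup>*\<^sup>* H H' \<and> graph_iso H' G)"

definition sp_floor :: "graph \<Rightarrow> nat" where
  "sp_floor G = Inf {sp H | H. wf_graph H \<and> is_minor G H}"

end

(* Let H have G \ e as a minor with sp H = sp_floor (G \ e), and let P be a longest unique
   shortest path of H, from s to t. Following the minor operations, every surviving vertex of H
   is sent to the vertex of G \ e it is contracted into, and the fibres of this map are connected
   in H. At least two of the parallel v-w edges survive in G \ e. If one of them is not on P, give
   H a new edge parallel to it. Otherwise both lie on P, at positions i < j, and the fibre of the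
   i-th vertex of P also contains the j-th or the (j+1)-th one; by a discrete intermediate value
   argument it then contains a vertex u at distance i + 1 from s, and H gets the new edge
   {u, P(i+1)}. Either way every s-t path through the new edge is longer than P, so the new graph
   keeps P as a unique shortest path, has the same vertices, and has G as a minor; hence
   sp_floor G \<le> sp_floor (G \ e). The converse holds since deleting e is a minor operation. *)

theory Submission
  imports Defs
begin

section \<open>Walks and paths\<close>

definition ends_wf :: "graph \<Rightarrow> bool" where
  "ends_wf G \<longleftrightarrow> (\<forall>g\<in>edges G. card (ends G g) = 2 \<and> ends G g \<subseteq> verts G)"

lemma wf_graph_imp_ends_wf: "wf_graph G \<Longrightarrow> ends_wf G"
  unfolding wf_graph_def ends_wf_def by auto

inductive walk :: "graph \<Rightarrow> nat \<Rightarrow> nat \<Rightarrow> nat \<Rightarrow> bool" for G where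
  refl: "walk G x x 0"
| step: "g \<in> edges G \<Longrightarrow> ends G g = {x, y} \<Longrightarrow> walk G y z n \<Longrightarrow> walk G x z (Suc n)"

lemma walk_append: "walk G x y n \<Longrightarrow> walk G y z m \<Longrightarrow> walk G x z (n + m)"
  by (induction rule: walk.induct) (auto intro: walk.intros)

lemma walk_edge: "g \<in> edges G \<Longrightarrow> ends G g = {x, y} \<Longrightarrow> walk G x y 1"
  using walk.step[OF _ _ walk.refl] by simp

lemma walk_sym: "walk G x y n \<Longrightarrow> walk G y x n"
proof (induction rule: walk.induct)
  case (refl x)
  show ?case by (rule walk.refl)
next
  case (step g x y z n)
  have "walk G y x 1"
    using step.hyps(1,2) walk_edge[of g G y x] by (simp add: insert_commute)
  from walk_append[OF step.IH this] show ?case by simp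
qed

lemma is_path_drop:
  assumes "is_path G u v vs es" "k < length vs"
  shows "is_path G (vs!k) v (drop k vs) (drop k es)"
  using assms unfolding is_path_def
  by (auto simp: hd_drop_conv_nth last_drop set_drop_subset[THEN subsetD] dest: in_set_dropD)

lemma walk_imp_path:
  assumes "walk G x y n" "ends_wf G" "x \<in> verts G"
  shows "\<exists>vs es. is_path G x y vs es \<and> length es \<le> n"
  using assms
proof (induction rule: walk.induct)
  case (refl x)
  then have "is_path G x x [x] []" unfolding is_path_def by auto
  then show ?case by blast
next
  case (step g x y z n)
  have "y \<in> verts G" using step unfolding ends_wf_def by auto
  then obtain vs es where p: "is_path G y z vs es" "length es \<le> n" using step by blast
  show ?case
  proof (cases "x \<in> set vs")
    case True
    then obtain k where k: "k < length vs" "vs!k = x" by (auto simp: in_set_conv_nth)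
    with is_path_drop[OF p(1) k(1)] p(2) show ?thesis
      by (intro exI[of _ "drop k vs"] exI[of _ "drop k es"]) auto
  next
    case False
    then have "is_path G x z (x # vs) (g # es)"
      using p(1) step.hyps step.prems unfolding is_path_def by (auto simp: nth_Cons' hd_conv_nth)
    then show ?thesis using p(2) by fastforce
  qed
qed

lemma path_segment_walk:
  assumes p: "is_path G u v vs es" and "i \<le> j" "j \<le> length es"
    and seg: "\<And>k. i \<le> k \<Longrightarrow> k < j \<Longrightarrow> es!k \<in> edges G' \<and> ends G' (es!k) = ends G (es!k)"
  shows "walk G' (vs!i) (vs!j) (j - i)"
  using assms(2-3) seg
proof (induction j)
  case 0
  then show ?case by (simp add: walk.refl)
next
  case (Suc j)
  show ?case
  proof (cases "i = Suc j")
    case True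
    then show ?thesis by (simp add: walk.refl)
  next
    case False
    then have "walk G' (vs!i) (vs!j) (j - i)" using Suc by simp
    moreover have "walk G' (vs!j) (vs!Suc j) 1"
      using Suc.prems p False by (intro walk_edge[of "es!j"]) (auto simp: is_path_def)
    ultimately show ?thesis using False Suc.prems(1) walk_append by (fastforce simp: Suc_diff_le)
  qed
qed

lemma is_path_length: "is_path G u v vs es \<Longrightarrow> length vs = Suc (length es)"
  unfolding is_path_def by simp

lemma is_path_nth_first: "is_path G u v vs es \<Longrightarrow> vs!0 = u"
  unfolding is_path_def by (cases vs) auto

lemma is_path_nth_last: "is_path G u v vs es \<Longrightarrow> vs!length es = v"
  unfolding is_path_def by (cases vs rule: rev_cases) (auto simp: nth_append)

lemma path_walks:
  assumes p: "is_path G s t vs es" and "k \<le> length es"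
  shows "walk G (vs!k) s k" "walk G (vs!k) t (length es - k)"
proof -
  have "walk G (vs!0) (vs!k) (k - 0)"
    using assms by (intro path_segment_walk[OF p]) (auto simp: is_path_def)
  then show "walk G (vs!k) s k" using is_path_nth_first[OF p] by (simp add: walk_sym)
  have "walk G (vs!k) (vs!length es) (length es - k)"
    using assms by (intro path_segment_walk[OF p]) (auto simp: is_path_def)
  then show "walk G (vs!k) t (length es - k)" using is_path_nth_last[OF p] by simp
qed

lemma is_path_distinct_edges:
  assumes "is_path G u v vs es"
  shows "distinct es"
proof -
  have d: "distinct vs" "length vs = Suc (length es)" using assms unfolding is_path_def by auto
  have "i = j" if ij: "i < length es" "j < length es" "es!i = es!j" for i j
  proof -
    have "{vs!i, vs!Suc i} = {vs!j, vs!Suc j}" using assms ij unfolding is_path_def by metis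
    then have "(vs!i = vs!j \<and> vs!Suc i = vs!Suc j) \<or> (vs!i = vs!Suc j \<and> vs!Suc i = vs!j)"
      by (auto simp: doubleton_eq_iff)
    then show ?thesis
    proof
      assume "vs!i = vs!j \<and> vs!Suc i = vs!Suc j"
      then show ?thesis using d ij nth_eq_iff_index_eq[of vs i j] by auto
    next
      assume "vs!i = vs!Suc j \<and> vs!Suc i = vs!j"
      then have "i = Suc j" "Suc i = j"
        using d ij nth_eq_iff_index_eq[of vs i "Suc j"] nth_eq_iff_index_eq[of vs "Suc i" j] by auto
      then show ?thesis by simp
    qed
  qed
  then show ?thesis by (auto simp: distinct_conv_nth)
qed

section \<open>Shortest paths and the parade number\<close>

definition add_edge :: "graph \<Rightarrow> nat \<Rightarrow> nat set \<Rightarrow> graph" where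
  "add_edge H f S = H\<lparr>edges := insert f (edges H), ends := (ends H)(f := S)\<rparr>"

lemma add_edge_simps [simp]:
  "verts (add_edge H f S) = verts H"
  "edges (add_edge H f S) = insert f (edges H)"
  "ends (add_edge H f S) h = (if h = f then S else ends H h)"
  unfolding add_edge_def by simp_all

definition shortest_path :: "graph \<Rightarrow> nat \<Rightarrow> nat \<Rightarrow> nat list \<Rightarrow> nat list \<Rightarrow> bool" where
  "shortest_path G u v vs es \<longleftrightarrow> is_path G u v vs es \<and>
     (\<forall>vs' es'. is_path G u v vs' es' \<longrightarrow> length vs \<le> length vs')"

definition unique_shortest_path_between ::
    "graph \<Rightarrow> nat \<Rightarrow> nat \<Rightarrow> nat list \<Rightarrow> nat list \<Rightarrow> bool" where
  "unique_shortest_path_between G u v vs es \<longleftrightarrow> shortest_path G u v vs es \<and>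
     (\<forall>vs' es'. is_path G u v vs' es' \<and> length vs' = length vs \<longrightarrow> vs' = vs \<and> es' = es)"

lemma unique_shortest_path_iff:
  "unique_shortest_path G vs es \<longleftrightarrow> (\<exists>u v. unique_shortest_path_between G u v vs es)"
  unfolding unique_shortest_path_def unique_shortest_path_between_def shortest_path_def by blast

definition paths_through_longer :: "graph \<Rightarrow> nat \<Rightarrow> nat \<Rightarrow> nat \<Rightarrow> nat \<Rightarrow> bool" where
  "paths_through_longer G f s t n \<longleftrightarrow>
     (\<forall>vs es. is_path G s t vs es \<longrightarrow> f \<in> set es \<longrightarrow> n < length es)"

lemma is_path_add_edge:
  assumes "is_path H u v vs es" "f \<notin> edges H"
  shows "is_path (add_edge H f S) u v vs es"
proof -
  have "es!i \<noteq> f" if "i < length es" for i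
    using that assms nth_mem unfolding is_path_def by fastforce
  then show ?thesis using assms unfolding is_path_def by auto
qed

lemma is_path_add_edge_avoiding:
  assumes "is_path (add_edge H f S) u v vs es" "f \<notin> set es"
  shows "is_path H u v vs es"
proof -
  have "es!i \<noteq> f" if "i < length es" for i using that assms(2) nth_mem by fastforce
  then show ?thesis using assms unfolding is_path_def by auto
qed

lemma unique_shortest_path_between_add_edge:
  assumes usp: "unique_shortest_path_between H s t vs es" and f: "f \<notin> edges H"
    and long: "paths_through_longer (add_edge H f S) f s t (length es)"
  shows "unique_shortest_path_between (add_edge H f S) s t vs es"
proof -
  have p: "is_path H s t vs es"
    and sh: "\<And>vs' es'. is_path H s t vs' es' \<Longrightarrow> length vs \<le> length vs'"
    and un: "\<And>vs' es'. is_path H s t vs' es' \<Longrightarrow> length vs' = length vs \<Longrightarrow> vs' = vs \<and> es' = es"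
    using usp unfolding unique_shortest_path_between_def shortest_path_def by auto
  have short_avoids: "is_path H s t vs' es'"
    if p': "is_path (add_edge H f S) s t vs' es'" and le: "length vs' \<le> length vs" for vs' es'
  proof -
    have "f \<notin> set es'"
      using long p' le is_path_length[OF p] is_path_length[OF p']
      unfolding paths_through_longer_def by force
    then show ?thesis using is_path_add_edge_avoiding[OF p'] by blast
  qed
  have "length vs \<le> length vs'" if "is_path (add_edge H f S) s t vs' es'" for vs' es'
    using short_avoids[OF that] sh by force
  moreover have "vs' = vs \<and> es' = es"
    if "is_path (add_edge H f S) s t vs' es'" "length vs' = length vs" for vs' es'
    using short_avoids[OF that(1)] un that(2) by simp
  ultimately show ?thesis using is_path_add_edge[OF p f]
    unfolding unique_shortest_path_between_def shortest_path_def by blast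
qed

text \<open>Exchanging f for its parallel twin g turns a path through f into an s-t path of H
  that differs from the unique shortest one.\<close>

lemma paths_through_parallel_longer:
  assumes usp: "unique_shortest_path_between H s t vs es"
    and f: "f \<notin> edges H" and g: "g \<in> edges H" "g \<notin> set es"
  shows "paths_through_longer (add_edge H f (ends H g)) f s t (length es)"
  unfolding paths_through_longer_def
proof (intro allI impI)
  fix vs' es' assume p': "is_path (add_edge H f (ends H g)) s t vs' es'" and "f \<in> set es'"
  have p: "is_path H s t vs es"
    and sh: "\<And>vs' es'. is_path H s t vs' es' \<Longrightarrow> length vs \<le> length vs'"
    and un: "\<And>vs' es'. is_path H s t vs' es' \<Longrightarrow> length vs' = length vs \<Longrightarrow> vs' = vs \<and> es' = es"
    using usp unfolding unique_shortest_path_between_def shortest_path_def by auto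
  define es'' where "es'' = map (\<lambda>h. if h = f then g else h) es'"
  have "set es'' \<subseteq> edges H"
    using p' g(1) unfolding es''_def is_path_def by auto
  moreover have "ends H (es''!i) = {vs'!i, vs'!Suc i}" if "i < length es'" for i
    using p' that unfolding is_path_def es''_def by (cases "es'!i = f") auto
  ultimately have p'': "is_path H s t vs' es''"
    using p' unfolding is_path_def es''_def by auto
  have "g \<in> set es''" using \<open>f \<in> set es'\<close> unfolding es''_def by force
  then have "length vs' \<noteq> length vs" using un[OF p''] g(2) by blast
  moreover have "length vs \<le> length vs'" using sh[OF p''] .
  ultimately show "length es < length es'"
    using is_path_length[OF p] is_path_length[OF p'] by linarith
qed

lemma shortest_path_walk_bound:
  assumes "ends_wf H" and sh: "shortest_path H s t vs es"
    and w: "walk H x s a" "walk H x t b"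
  shows "length es \<le> a + b"
proof -
  have p: "is_path H s t vs es" using sh unfolding shortest_path_def by simp
  then have "s \<in> verts H"
    using is_path_nth_first[OF p] nth_mem[of 0 vs] is_path_length[OF p] unfolding is_path_def by auto
  moreover have "walk H s t (a + b)" using walk_append[OF walk_sym[OF w(1)] w(2)] .
  ultimately obtain vs' es' where p': "is_path H s t vs' es'" "length es' \<le> a + b"
    using walk_imp_path assms(1) by blast
  moreover have "length vs \<le> length vs'" using sh p'(1) unfolding shortest_path_def by blast
  ultimately show ?thesis using is_path_length[OF p] is_path_length[OF p'(1)] by linarith
qed

definition walks_via_ge :: "graph \<Rightarrow> nat \<Rightarrow> nat \<Rightarrow> nat \<Rightarrow> nat \<Rightarrow> nat \<Rightarrow> bool" where
  "walks_via_ge G s x y t n \<longleftrightarrow> (\<forall>a b. walk G x s a \<longrightarrow> walk G y t b \<longrightarrow> n \<le> a + b)"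

text \<open>A path through the new edge {x, y} splits into a walk from s to one end and a walk
  from the other end to t.\<close>

lemma paths_through_chord_longer:
  assumes f: "f \<notin> edges H"
    and xy: "walks_via_ge H s x y t n" and yx: "walks_via_ge H s y x t n"
  shows "paths_through_longer (add_edge H f {x, y}) f s t n"
  unfolding paths_through_longer_def
proof (intro allI impI)
  fix vs es assume p: "is_path (add_edge H f {x, y}) s t vs es" and "f \<in> set es"
  then obtain k where k: "k < length es" "es!k = f" by (auto simp: in_set_conv_nth)
  have other: "es!i \<in> edges H \<and> ends H (es!i) = ends (add_edge H f {x, y}) (es!i)"
    if "i < length es" "i \<noteq> k" for i
  proof -
    have "es!i \<noteq> f"
      using that k nth_eq_iff_index_eq[OF is_path_distinct_edges[OF p]] by metis
    moreover have "es!i \<in> insert f (edges H)" using p that nth_mem unfolding is_path_def by fastforce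
    ultimately show ?thesis by simp
  qed
  have "walk H (vs!0) (vs!k) (k - 0)"
    using k other by (intro path_segment_walk[OF p]) auto
  then have ws: "walk H (vs!k) s k" using is_path_nth_first[OF p] by (simp add: walk_sym)
  have wt: "walk H (vs!Suc k) (vs!length es) (length es - Suc k)"
    using k other by (intro path_segment_walk[OF p]) auto
  have "ends (add_edge H f {x, y}) (es!k) = {vs!k, vs!Suc k}"
    using p k(1) unfolding is_path_def by blast
  then have "{x, y} = {vs!k, vs!Suc k}" using k(2) by simp
  then have "n \<le> k + (length es - Suc k)"
    using xy yx ws wt is_path_nth_last[OF p] unfolding walks_via_ge_def
    by (auto simp: doubleton_eq_iff)
  then show "n < length es" using k by linarith
qed

lemma finite_usp_lengths:
  assumes "finite (verts G)"
  shows "finite {length vs | vs es. unique_shortest_path G vs es}"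
proof (rule finite_subset)
  show "{length vs | vs es. unique_shortest_path G vs es} \<subseteq> {..card (verts G)}"
  proof
    fix n assume "n \<in> {length vs | vs es. unique_shortest_path G vs es}"
    then obtain vs es u v where "n = length vs" "is_path G u v vs es"
      unfolding unique_shortest_path_def by blast
    then have "distinct vs" "set vs \<subseteq> verts G" unfolding is_path_def by auto
    then have "length vs \<le> card (verts G)"
      using assms by (metis card_mono distinct_card)
    then show "n \<in> {..card (verts G)}" using \<open>n = length vs\<close> by simp
  qed
qed simp

lemma unique_shortest_path_singleton:
  assumes "x \<in> verts G"
  shows "unique_shortest_path G [x] []"
proof -
  have "is_path G x x vs' es' \<longleftrightarrow> vs' = [x] \<and> es' = []" for vs' es'
  proof
    assume "is_path G x x vs' es'"
    then have "length vs' = Suc (length es')" "distinct vs'" "hd vs' = x" "last vs' = x"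
      unfolding is_path_def by auto
    then show "vs' = [x] \<and> es' = []"
      by (cases vs') (auto split: if_splits simp: last_in_set)
  qed (use assms in \<open>auto simp: is_path_def\<close>)
  then show ?thesis unfolding unique_shortest_path_def by (intro exI[of _ x]) simp
qed

lemma length_le_usp:
  assumes "finite (verts G)" "unique_shortest_path G vs es"
  shows "length vs \<le> usp G"
proof -
  have "length vs \<in> {length vs | vs es. unique_shortest_path G vs es}" using assms(2) by blast
  then show ?thesis unfolding usp_def by (rule Max_ge[OF finite_usp_lengths[OF assms(1)]])
qed

lemma usp_attained:
  assumes "finite (verts G)" "verts G \<noteq> {}"
  obtains s t vs es where "unique_shortest_path_between G s t vs es" "length vs = usp G"
proof -
  obtain x where "x \<in> verts G" using assms(2) by auto
  then have "length [x] \<in> {length vs | vs es. unique_shortest_path G vs es}"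
    using unique_shortest_path_singleton[OF \<open>x \<in> verts G\<close>] by blast
  then have "{length vs | vs es. unique_shortest_path G vs es} \<noteq> {}" by blast
  from Max_in[OF finite_usp_lengths[OF assms(1)] this] show ?thesis
    using that unfolding usp_def unique_shortest_path_iff by auto
qed

lemma sp_add_edge_le:
  assumes "finite (verts H)" "unique_shortest_path (add_edge H f S) vs es" "length vs = usp H"
  shows "sp (add_edge H f S) \<le> sp H"
  using length_le_usp[of "add_edge H f S" vs es] assms unfolding sp_def by (simp add: diff_le_mono2)

section \<open>Tracking minor operations\<close>

abbreviation merge :: "nat \<Rightarrow> nat \<Rightarrow> nat \<Rightarrow> nat" where
  "merge a b \<equiv> \<lambda>x. if x = b then a else x"

abbreviation contracted :: "graph \<Rightarrow> nat \<Rightarrow> nat \<Rightarrow> nat \<Rightarrow> graph" where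
  "contracted H e a b \<equiv>
     \<lparr>verts = verts H - {b}, edges = edges H - {e}, ends = (\<lambda>f. merge a b ` ends H f)\<rparr>"

lemma card_merge_image:
  assumes "card X = 2" "X \<noteq> {a, b}"
  shows "card (merge a b ` X) = 2"
proof -
  have "inj_on (merge a b) X"
  proof (rule inj_onI, rule ccontr)
    fix x y assume xy: "x \<in> X" "y \<in> X" "merge a b x = merge a b y" "x \<noteq> y"
    then have "{x, y} = {a, b}" by (auto split: if_splits)
    moreover have "X = {x, y}"
      using xy assms(1) by (metis card_2_iff doubleton_eq_iff insertE singletonD)
    ultimately show False using assms(2) by simp
  qed
  then show ?thesis using assms(1) card_image by metis
qed

lemma ends_wf_minor_step: "minor_step H H' \<Longrightarrow> ends_wf H \<Longrightarrow> ends_wf H'"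
proof (induction rule: minor_step.induct)
  case (del_vertex x H)
  then show ?case unfolding ends_wf_def by auto
next
  case (del_edge e H)
  then show ?case unfolding ends_wf_def delete_edge_def by auto
next
  case (contract e H a b)
  have "card (merge a b ` ends H g) = 2 \<and> merge a b ` ends H g \<subseteq> verts H - {b}"
    if "g \<in> edges H - {e}" for g
  proof -
    have "ends H g \<noteq> {a, b}" "card (ends H g) = 2" "ends H g \<subseteq> verts H" "a \<in> verts H"
      using that contract unfolding ends_wf_def by auto
    then show ?thesis using card_merge_image contract.hyps(3) by auto
  qed
  then show ?case unfolding ends_wf_def by simp
qed

lemma minor_step_add_edge_contract:
  assumes e: "e \<in> edges H" "ends H e = {a, b}" "a \<noteq> b"
      "\<forall>e'\<in>edges H. e' \<noteq> e \<longrightarrow> ends H e' \<noteq> ends H e"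
    and f: "f \<notin> edges H" and S: "S \<noteq> {a, b}"
  shows "minor_step (add_edge H f S) (add_edge (contracted H e a b) f (merge a b ` S))"
proof -
  have "minor_step (add_edge H f S) (contracted (add_edge H f S) e a b)"
    using e f S by (intro minor_step.contract) auto
  moreover have "contracted (add_edge H f S) e a b = add_edge (contracted H e a b) f (merge a b ` S)"
    using e f by (auto simp: add_edge_def fun_eq_iff)
  ultimately show ?thesis by simp
qed

definition adjacent_in :: "graph \<Rightarrow> nat set \<Rightarrow> nat \<Rightarrow> nat \<Rightarrow> bool" where
  "adjacent_in G Y a b \<longleftrightarrow> a \<in> Y \<and> b \<in> Y \<and> (\<exists>g\<in>edges G. ends G g = {a, b})"

abbreviation connected_in :: "graph \<Rightarrow> nat set \<Rightarrow> nat \<Rightarrow> nat \<Rightarrow> bool" where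
  "connected_in G Y \<equiv> (adjacent_in G Y)\<^sup>*\<^sup>*"

lemma connected_in_sym: "connected_in G Y a b \<Longrightarrow> connected_in G Y b a"
  by (rule symp_rtranclp[THEN sympD]) (auto simp: symp_def adjacent_in_def insert_commute)

lemma connected_in_mono:
  assumes "connected_in G Y a b" "edges G \<subseteq> edges G'" "\<forall>g\<in>edges G. ends G' g = ends G g"
  shows "connected_in G' Y a b"
proof -
  have adj_mono: "adjacent_in G' Y x y" if adj: "adjacent_in G Y x y" for x y
  proof -
    obtain g where "x \<in> Y" "y \<in> Y" "g \<in> edges G" "ends G g = {x, y}"
      using adj unfolding adjacent_in_def by blast
    then show ?thesis using assms(2,3) unfolding adjacent_in_def by (intro conjI bexI[of _ g]) auto
  qed
  have "connected_in G Y a b \<longrightarrow> connected_in G' Y a b"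
    by (rule mono_rtranclp) (simp add: adj_mono)
  with assms(1) show ?thesis by simp
qed

lemma connected_in_contracted:
  assumes wf: "ends_wf H" and e: "e \<in> edges H" "ends H e = {a, b}"
    and C: "C = {x \<in> verts H. \<pi> (merge a b x) = y}"
    and conn: "connected_in (contracted H e a b)
                 {x \<in> verts (contracted H e a b). \<pi> x = y} (merge a b x1) (merge a b x2)"
    and x12: "x1 \<in> C" "x2 \<in> C"
  shows "connected_in H C x1 x2"
proof -
  let ?C' = "{x \<in> verts (contracted H e a b). \<pi> x = y}"
  have to_merged: "connected_in H C x (merge a b x)" if "x \<in> C" for x
  proof (cases "x = b")
    case True
    have "a \<in> verts H" using wf e unfolding ends_wf_def by auto
    then have "a \<in> C" using that True C by auto
    then have "adjacent_in H C b a"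
      using that True e unfolding adjacent_in_def by (auto simp: insert_commute)
    then show ?thesis using True by auto
  qed simp
  have "connected_in H C z z'" if "connected_in (contracted H e a b) ?C' z z'" for z z'
    using that
  proof (induction rule: rtranclp_induct)
    case (step z' z'')
    from step.hyps(2) obtain g where g: "z' \<in> ?C'" "z'' \<in> ?C'" "g \<in> edges H"
      "merge a b ` ends H g = {z', z''}"
      unfolding adjacent_in_def by auto
    then obtain p q where pq: "ends H g = {p, q}"
      using wf unfolding ends_wf_def by (meson card_2_iff)
    have "ends H g \<subseteq> verts H" using wf g(3) unfolding ends_wf_def by auto
    then have "p \<in> C" "q \<in> C" using pq g C by (auto simp: image_iff)
    then have "adjacent_in H C p q" using g(3) pq unfolding adjacent_in_def by auto
    moreover note connected_in_sym[OF to_merged[OF \<open>p \<in> C\<close>]] to_merged[OF \<open>q \<in> C\<close>]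
    ultimately have "connected_in H C (merge a b p) (merge a b q)"
      by (meson converse_rtranclp_into_rtranclp rtranclp_trans)
    moreover have "{merge a b p, merge a b q} = {z', z''}"
      unfolding g(4)[symmetric] pq by (simp only: image_insert image_empty)
    ultimately have "connected_in H C z' z''"
      using connected_in_sym[of H C "merge a b p" "merge a b q"] by (auto simp: doubleton_eq_iff)
    with step.IH show ?case by (rule rtranclp_trans)
  qed (rule rtranclp.rtrancl_refl)
  from this[OF conn] have "connected_in H C (merge a b x1) (merge a b x2)" .
  then show ?thesis
    using to_merged[OF x12(1)] connected_in_sym[OF to_merged[OF x12(2)]] by (metis rtranclp_trans)
qed

text \<open>\<open>tracks H H' \<pi>\<close> records a sequence of minor operations from H to H': \<open>\<pi>\<close> sends each
  vertex of H to the vertex of H' it was contracted into and fixes the deleted vertices, which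
  therefore lie outside H'. Its fibres are connected in H, and an edge added to H before the
  operations has the same effect as its image added to H' afterwards.\<close>

definition tracks :: "graph \<Rightarrow> graph \<Rightarrow> (nat \<Rightarrow> nat) \<Rightarrow> bool" where
  "tracks H H' \<pi> \<longleftrightarrow> ends_wf H' \<and> verts H' \<subseteq> verts H \<and> edges H' \<subseteq> edges H \<and>
    (\<forall>x. x \<notin> verts H \<longrightarrow> \<pi> x = x) \<and>
    (\<forall>g\<in>edges H'. ends H' g = \<pi> ` ends H g) \<and>
    (\<forall>f S. f \<notin> edges H \<longrightarrow> S \<subseteq> verts H \<longrightarrow> card (\<pi> ` S) = 2 \<longrightarrow> \<pi> ` S \<subseteq> verts H' \<longrightarrow>
        minor_step\<^sup>*\<^sup>* (add_edge H f S) (add_edge H' f (\<pi> ` S))) \<and>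
    (\<forall>y\<in>verts H'. \<forall>x1\<in>verts H. \<forall>x2\<in>verts H. \<pi> x1 = y \<longrightarrow> \<pi> x2 = y \<longrightarrow>
        connected_in H {x \<in> verts H. \<pi> x = y} x1 x2)"

lemma tracksI:
  assumes "ends_wf H'" "verts H' \<subseteq> verts H" "edges H' \<subseteq> edges H"
    and "\<And>x. x \<notin> verts H \<Longrightarrow> \<pi> x = x"
    and "\<And>g. g \<in> edges H' \<Longrightarrow> ends H' g = \<pi> ` ends H g"
    and "\<And>f S. f \<notin> edges H \<Longrightarrow> S \<subseteq> verts H \<Longrightarrow> card (\<pi> ` S) = 2 \<Longrightarrow> \<pi> ` S \<subseteq> verts H' \<Longrightarrow>
           minor_step\<^sup>*\<^sup>* (add_edge H f S) (add_edge H' f (\<pi> ` S))"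
    and "\<And>y x1 x2. y \<in> verts H' \<Longrightarrow> x1 \<in> verts H \<Longrightarrow> x2 \<in> verts H \<Longrightarrow> \<pi> x1 = y \<Longrightarrow> \<pi> x2 = y \<Longrightarrow>
           connected_in H {x \<in> verts H. \<pi> x = y} x1 x2"
  shows "tracks H H' \<pi>"
  unfolding tracks_def using assms by simp

lemma tracksD:
  assumes "tracks H H' \<pi>"
  shows "ends_wf H'" "verts H' \<subseteq> verts H" "edges H' \<subseteq> edges H"
    and "x \<notin> verts H \<Longrightarrow> \<pi> x = x"
    and "g \<in> edges H' \<Longrightarrow> ends H' g = \<pi> ` ends H g"
    and "f \<notin> edges H \<Longrightarrow> S \<subseteq> verts H \<Longrightarrow> card (\<pi> ` S) = 2 \<Longrightarrow> \<pi> ` S \<subseteq> verts H' \<Longrightarrow>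
           minor_step\<^sup>*\<^sup>* (add_edge H f S) (add_edge H' f (\<pi> ` S))"
    and "y \<in> verts H' \<Longrightarrow> x1 \<in> verts H \<Longrightarrow> x2 \<in> verts H \<Longrightarrow> \<pi> x1 = y \<Longrightarrow> \<pi> x2 = y \<Longrightarrow>
           connected_in H {x \<in> verts H. \<pi> x = y} x1 x2"
  using assms unfolding tracks_def by simp_all

lemma tracks_refl: "ends_wf H \<Longrightarrow> tracks H H id"
  by (rule tracksI) auto

lemma tracks_del_vertex:
  assumes x0: "x0 \<in> verts H" "\<forall>e\<in>edges H. x0 \<notin> ends H e"
    and t: "tracks (H\<lparr>verts := verts H - {x0}\<rparr>) H' \<pi>"
  shows "tracks H H' \<pi>"
proof -
  let ?H0 = "H\<lparr>verts := verts H - {x0}\<rparr>"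
  have x0': "\<pi> x0 = x0" "x0 \<notin> verts H'" using tracksD(2,4)[OF t] by auto
  show ?thesis
  proof (rule tracksI)
    show "ends_wf H'" "edges H' \<subseteq> edges H" using tracksD(1,3)[OF t] by simp_all
    show "verts H' \<subseteq> verts H" using tracksD(2)[OF t] by auto
  next
    fix x assume "x \<notin> verts H"
    then show "\<pi> x = x" using tracksD(4)[OF t] by simp
  next
    fix g assume "g \<in> edges H'"
    then show "ends H' g = \<pi> ` ends H g" using tracksD(5)[OF t] by simp
  next
    fix f S assume f: "f \<notin> edges H" and S: "S \<subseteq> verts H" "card (\<pi> ` S) = 2" "\<pi> ` S \<subseteq> verts H'"
    then have "x0 \<notin> S" using x0' by auto
    then have "minor_step (add_edge H f S) ((add_edge H f S)\<lparr>verts := verts H - {x0}\<rparr>)"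
      using minor_step.del_vertex[of x0 "add_edge H f S"] x0 by simp
    moreover have "(add_edge H f S)\<lparr>verts := verts H - {x0}\<rparr> = add_edge ?H0 f S"
      by (cases H) (simp add: add_edge_def)
    moreover have "minor_step\<^sup>*\<^sup>* (add_edge ?H0 f S) (add_edge H' f (\<pi> ` S))"
      using \<open>x0 \<notin> S\<close> f S by (intro tracksD(6)[OF t]) auto
    ultimately show "minor_step\<^sup>*\<^sup>* (add_edge H f S) (add_edge H' f (\<pi> ` S))"
      by (metis converse_rtranclp_into_rtranclp)
  next
    fix y x1 x2 assume x12: "y \<in> verts H'" "x1 \<in> verts H" "x2 \<in> verts H" "\<pi> x1 = y" "\<pi> x2 = y"
    then have "connected_in ?H0 {x \<in> verts ?H0. \<pi> x = y} x1 x2"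
      using x0' by (intro tracksD(7)[OF t]) auto
    moreover have "{x \<in> verts ?H0. \<pi> x = y} = {x \<in> verts H. \<pi> x = y}" using x12 x0' by auto
    moreover have "adjacent_in ?H0 = adjacent_in H"
      unfolding adjacent_in_def by (intro ext) simp
    ultimately show "connected_in H {x \<in> verts H. \<pi> x = y} x1 x2" by simp
  qed
qed

lemma tracks_del_edge:
  assumes e: "e \<in> edges H" and t: "tracks (delete_edge H e) H' \<pi>"
  shows "tracks H H' \<pi>"
proof (rule tracksI)
  show "ends_wf H'" "verts H' \<subseteq> verts H" using tracksD(1,2)[OF t] by (simp_all add: delete_edge_def)
  show "edges H' \<subseteq> edges H" using tracksD(3)[OF t] by (auto simp: delete_edge_def)
next
  fix x assume "x \<notin> verts H"
  then show "\<pi> x = x" using tracksD(4)[OF t] by (simp add: delete_edge_def)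
next
  fix g assume "g \<in> edges H'"
  then show "ends H' g = \<pi> ` ends H g" using tracksD(5)[OF t] by (simp add: delete_edge_def)
next
  fix f S assume f: "f \<notin> edges H" and S: "S \<subseteq> verts H" "card (\<pi> ` S) = 2" "\<pi> ` S \<subseteq> verts H'"
  have "minor_step (add_edge H f S) (delete_edge (add_edge H f S) e)"
    using e by (intro minor_step.del_edge) simp
  moreover have "delete_edge (add_edge H f S) e = add_edge (delete_edge H e) f S"
    using e f by (cases H) (auto simp: add_edge_def delete_edge_def insert_Diff_if)
  moreover have "minor_step\<^sup>*\<^sup>* (add_edge (delete_edge H e) f S) (add_edge H' f (\<pi> ` S))"
    using f S by (intro tracksD(6)[OF t]) (auto simp: delete_edge_def)
  ultimately show "minor_step\<^sup>*\<^sup>* (add_edge H f S) (add_edge H' f (\<pi> ` S))"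
    by (metis converse_rtranclp_into_rtranclp)
next
  fix y x1 x2 assume "y \<in> verts H'" "x1 \<in> verts H" "x2 \<in> verts H" "\<pi> x1 = y" "\<pi> x2 = y"
  then have "connected_in (delete_edge H e) {x \<in> verts H. \<pi> x = y} x1 x2"
    using tracksD(7)[OF t] by (simp add: delete_edge_def)
  then show "connected_in H {x \<in> verts H. \<pi> x = y} x1 x2"
    by (rule connected_in_mono) (auto simp: delete_edge_def)
qed

lemma tracks_contract:
  assumes wf: "ends_wf H"
    and e: "e \<in> edges H" "ends H e = {a, b}" "a \<noteq> b"
       "\<forall>e'\<in>edges H. e' \<noteq> e \<longrightarrow> ends H e' \<noteq> ends H e"
    and t: "tracks (contracted H e a b) H' \<pi>"
  shows "tracks H H' (\<pi> \<circ> merge a b)"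
proof -
  have ab: "a \<in> verts H" "b \<in> verts H" using wf e unfolding ends_wf_def by auto
  have merge_verts: "merge a b x \<in> verts (contracted H e a b)" if "x \<in> verts H" for x
    using that ab e(3) by auto
  have merge_image: "\<pi> ` merge a b ` X = (\<pi> \<circ> merge a b) ` X" for X
    by (simp only: image_comp)
  show ?thesis
  proof (rule tracksI)
    show "ends_wf H'" "verts H' \<subseteq> verts H" "edges H' \<subseteq> edges H" using tracksD(1-3)[OF t] by auto
    show "(\<pi> \<circ> merge a b) x = x" if "x \<notin> verts H" for x
      using that ab tracksD(4)[OF t, of x] by auto
  next
    fix g assume "g \<in> edges H'"
    then show "ends H' g = (\<pi> \<circ> merge a b) ` ends H g"
      unfolding merge_image[symmetric] using tracksD(5)[OF t] by (simp only: graph.select_convs)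
  next
    fix f S assume f: "f \<notin> edges H"
      and S: "S \<subseteq> verts H" "card ((\<pi> \<circ> merge a b) ` S) = 2" "(\<pi> \<circ> merge a b) ` S \<subseteq> verts H'"
    have "S \<noteq> {a, b}"
    proof
      assume "S = {a, b}"
      then have "(\<pi> \<circ> merge a b) ` S = {\<pi> a}" using e(3) by auto
      then show False using S(2) by simp
    qed
    then have "minor_step (add_edge H f S) (add_edge (contracted H e a b) f (merge a b ` S))"
      using minor_step_add_edge_contract[OF e f] by blast
    moreover have "minor_step\<^sup>*\<^sup>* (add_edge (contracted H e a b) f (merge a b ` S))
                     (add_edge H' f (\<pi> ` merge a b ` S))"
    proof (rule tracksD(6)[OF t])
      show "f \<notin> edges (contracted H e a b)" using f by simp
      show "merge a b ` S \<subseteq> verts (contracted H e a b)" using S(1) merge_verts by blast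
    qed (use S(2,3) in \<open>simp_all only: merge_image\<close>)
    ultimately show "minor_step\<^sup>*\<^sup>* (add_edge H f S) (add_edge H' f ((\<pi> \<circ> merge a b) ` S))"
      unfolding merge_image by (rule converse_rtranclp_into_rtranclp)
  next
    fix y x1 x2 assume x12: "y \<in> verts H'" "x1 \<in> verts H" "x2 \<in> verts H"
      "(\<pi> \<circ> merge a b) x1 = y" "(\<pi> \<circ> merge a b) x2 = y"
    then have "connected_in (contracted H e a b) {x \<in> verts (contracted H e a b). \<pi> x = y}
                 (merge a b x1) (merge a b x2)"
      using merge_verts by (intro tracksD(7)[OF t]) auto
    then show "connected_in H {x \<in> verts H. (\<pi> \<circ> merge a b) x = y} x1 x2"
      using x12 by (intro connected_in_contracted[OF wf e(1,2)]) auto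
  qed
qed

lemma minor_steps_tracks:
  assumes "minor_step\<^sup>*\<^sup>* H H'" "ends_wf H"
  shows "\<exists>\<pi>. tracks H H' \<pi>"
  using assms
proof (induction rule: converse_rtranclp_induct)
  case base
  then show ?case using tracks_refl by blast
next
  case (step H H1)
  then obtain \<pi> where t: "tracks H1 H' \<pi>" using ends_wf_minor_step by blast
  from step.hyps(1) show ?case
  proof cases
    case (del_vertex x)
    then show ?thesis using tracks_del_vertex t by blast
  next
    case (del_edge e)
    then show ?thesis using tracks_del_edge t by blast
  next
    case (contract e a b)
    then show ?thesis using tracks_contract[OF step.prems contract(2-5)] t by blast
  qed
qed

section \<open>Lifting a surviving parallel edge\<close>

definition walk_dist :: "graph \<Rightarrow> nat \<Rightarrow> nat \<Rightarrow> nat" where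
  "walk_dist G x y = (LEAST n. walk G x y n)"

lemma walk_dist_le: "walk G x y n \<Longrightarrow> walk_dist G x y \<le> n"
  unfolding walk_dist_def by (rule Least_le)

lemma walk_walk_dist: "walk G x y n \<Longrightarrow> walk G x y (walk_dist G x y)"
  unfolding walk_dist_def by (rule LeastI)

text \<open>Discrete intermediate value theorem: along an edge the distance to s changes by at most
  one.\<close>

lemma connected_in_walk_dist_ivt:
  assumes "connected_in H Y x y" "x \<in> Y" "walk H x s n"
    and "walk_dist H x s \<le> m" "m \<le> walk_dist H y s"
  shows "\<exists>u\<in>Y. walk H u s m \<and> walk_dist H u s = m"
  using assms
proof (induction arbitrary: n rule: converse_rtranclp_induct)
  case base
  then have "walk_dist H y s = m" by simp
  then show ?case
    using base.prems(1) walk_walk_dist[OF base.prems(2)] by (intro bexI[of _ y]) simp_all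
next
  case (step x x')
  show ?case
  proof (cases "walk_dist H x s = m")
    case True
    then show ?thesis
      using step.prems(1) walk_walk_dist[OF step.prems(2)] by (intro bexI[of _ x]) simp_all
  next
    case False
    from step.hyps(1) obtain g where "x' \<in> Y" "g \<in> edges H" "ends H g = {x', x}"
      unfolding adjacent_in_def by (auto simp: insert_commute)
    then have w': "walk H x' s (Suc (walk_dist H x s))"
      by (intro walk.step[OF _ _ walk_walk_dist[OF step.prems(2)]])
    have "walk_dist H x' s \<le> m"
      using walk_dist_le[OF w'] False step.prems(3) by linarith
    from step.IH[OF \<open>x' \<in> Y\<close> w' this step.prems(4)] show ?thesis .
  qed
qed

text \<open>Along Y the distance to s passes from at most i (at vs!i) to at least k > i (at vs!k),
  so some u \<in> Y is exactly as far from s as vs!Suc i; then the chord {u, vs!Suc i} creates no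
  shortcut between s and t.\<close>

lemma exists_shortcut_free_chord:
  assumes wf: "ends_wf H" and sh: "shortest_path H s t vs es"
    and ik: "i < k" "k \<le> length es"
    and Y: "vs!i \<in> Y" "connected_in H Y (vs!i) (vs!k)"
  shows "\<exists>u\<in>Y. walks_via_ge H s u (vs!Suc i) t (length es) \<and>
               walks_via_ge H s (vs!Suc i) u t (length es)"
proof -
  have p: "is_path H s t vs es" using sh unfolding shortest_path_def by simp
  have wi: "walk H (vs!i) s i" using path_walks[OF p] ik by simp
  have wq: "walk H (vs!Suc i) s (Suc i)" "walk H (vs!Suc i) t (length es - Suc i)"
    using path_walks[OF p] ik by simp_all
  have wk: "walk H (vs!k) t (length es - k)" using path_walks[OF p ik(2)] by simp
  have "Suc i \<le> a" if "walk H (vs!k) s a" for a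
    using shortest_path_walk_bound[OF wf sh that wk] ik by linarith
  then have "Suc i \<le> walk_dist H (vs!k) s"
    using walk_walk_dist[OF path_walks(1)[OF p ik(2)]] .
  moreover have "walk_dist H (vs!i) s \<le> Suc i" using walk_dist_le[OF wi] by simp
  ultimately obtain u where u: "u \<in> Y" "walk H u s (Suc i)" "walk_dist H u s = Suc i"
    using connected_in_walk_dist_ivt[OF Y(2,1) wi] by auto
  show ?thesis
  unfolding walks_via_ge_def proof (intro bexI[OF _ u(1)] conjI allI impI)
    fix a b assume ab: "walk H u s a" "walk H (vs!Suc i) t b"
    have "Suc i \<le> a" using walk_dist_le[OF ab(1)] u(3) by simp
    moreover have "length es \<le> Suc i + b" using shortest_path_walk_bound[OF wf sh wq(1) ab(2)] .
    ultimately show "length es \<le> a + b" by linarith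
  next
    fix a b assume ab: "walk H (vs!Suc i) s a" "walk H u t b"
    have "length es \<le> a + (length es - Suc i)"
      using shortest_path_walk_bound[OF wf sh ab(1) wq(2)] .
    moreover have "length es \<le> Suc i + b" using shortest_path_walk_bound[OF wf sh u(2) ab(2)] .
    ultimately show "length es \<le> a + b" by linarith
  qed
qed

lemma exists_lifted_chord:
  assumes wf: "ends_wf H" and t: "tracks H H' \<pi>" and sh: "shortest_path H s t vs es"
    and ij: "i < j" "j < length es" "es!i \<in> edges H'" "es!j \<in> edges H'"
    and same: "ends H' (es!i) = ends H' (es!j)"
    and f: "f \<notin> edges H"
  shows "\<exists>S. S \<subseteq> verts H \<and> card S = 2 \<and> \<pi> ` S = ends H' (es!i) \<and>
             paths_through_longer (add_edge H f S) f s t (length es)"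
proof -
  have p: "is_path H s t vs es" using sh unfolding shortest_path_def by simp
  have vs: "vs!k \<in> verts H" if "k \<le> length es" for k
    using p that nth_mem[of k vs] unfolding is_path_def by auto
  have ends': "ends H' (es!k) = {\<pi> (vs!k), \<pi> (vs!Suc k)}"
    if "k < length es" "es!k \<in> edges H'" for k
    using tracksD(5)[OF t that(2)] p that(1) unfolding is_path_def by simp
  have "card (ends H' (es!i)) = 2" "ends H' (es!i) \<subseteq> verts H'"
    using tracksD(1)[OF t] ij(3) unfolding ends_wf_def by auto
  then have neq: "\<pi> (vs!i) \<noteq> \<pi> (vs!Suc i)" and y: "\<pi> (vs!i) \<in> verts H'"
    using ends'[OF _ ij(3)] ij by auto
  define Y where "Y = {x \<in> verts H. \<pi> x = \<pi> (vs!i)}"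
  obtain k where k: "i < k" "k \<le> length es" "vs!k \<in> Y"
  proof -
    have "\<pi> (vs!i) \<in> {\<pi> (vs!j), \<pi> (vs!Suc j)}"
      using same ends'[OF _ ij(3)] ends'[OF ij(2,4)] ij by auto
    then show ?thesis using that[of j] that[of "Suc j"] ij vs unfolding Y_def by auto
  qed
  have i_Y: "vs!i \<in> Y" using vs ij unfolding Y_def by simp
  have "connected_in H Y (vs!i) (vs!k)"
    using k vs ij y unfolding Y_def by (intro tracksD(7)[OF t]) auto
  then obtain u where u: "u \<in> Y"
    "walks_via_ge H s u (vs!Suc i) t (length es)" "walks_via_ge H s (vs!Suc i) u t (length es)"
    using exists_shortcut_free_chord[OF wf sh k(1,2) i_Y] by blast
  have "u \<noteq> vs!Suc i" using u(1) neq unfolding Y_def by auto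
  then have "{u, vs!Suc i} \<subseteq> verts H \<and> card {u, vs!Suc i} = 2 \<and>
             \<pi> ` {u, vs!Suc i} = ends H' (es!i)"
    using u(1) vs[of "Suc i"] ij ends'[OF _ ij(3)] unfolding Y_def by auto
  then show ?thesis using paths_through_chord_longer[OF f u(2,3)] by blast
qed

text \<open>Two parallel edges of H' either leave one of them off the shortest path, and the new edge
  doubles it, or both lie on the path, and the new edge is a chord inside a fibre.\<close>

lemma exists_lifted_parallel_edge:
  assumes wf: "ends_wf H" and t: "tracks H H' \<pi>"
    and usp: "unique_shortest_path_between H s t vs es" and f: "f \<notin> edges H"
    and g: "g1 \<in> edges H'" "g2 \<in> edges H'" "g1 \<noteq> g2" "ends H' g1 = ends H' g2"
  shows "\<exists>S. S \<subseteq> verts H \<and> card S = 2 \<and> \<pi> ` S = ends H' g1 \<and>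
             paths_through_longer (add_edge H f S) f s t (length es)"
proof (cases "g1 \<in> set es \<and> g2 \<in> set es")
  case True
  then obtain i1 i2 where i: "i1 < length es" "es!i1 = g1" "i2 < length es" "es!i2 = g2"
    by (auto simp: in_set_conv_nth)
  have sh: "shortest_path H s t vs es"
    using usp unfolding unique_shortest_path_between_def by simp
  show ?thesis
  proof (cases "i1 < i2")
    case True
    then show ?thesis using exists_lifted_chord[OF wf t sh True] i g f by simp
  next
    case False
    then have "i2 < i1" using i g(3) by (metis linorder_neqE_nat)
    then show ?thesis using exists_lifted_chord[OF wf t sh \<open>i2 < i1\<close>] i g f by simp
  qed
next
  case False
  then obtain g where g': "g \<in> edges H'" "g \<notin> set es" "ends H' g = ends H' g1"
    using g by blast
  have "g \<in> edges H" using g'(1) tracksD(3)[OF t] by blast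
  then have "ends H g \<subseteq> verts H \<and> card (ends H g) = 2 \<and> \<pi> ` ends H g = ends H' g1"
    using wf g' tracksD(5)[OF t g'(1)] unfolding ends_wf_def by simp
  then show ?thesis
    using paths_through_parallel_longer[OF usp f \<open>g \<in> edges H\<close> g'(2)] by blast
qed

section \<open>Minors and the spectator floor\<close>

lemma graph_iso_refl: "graph_iso G G"
  unfolding graph_iso_def by (intro exI[of _ id]) auto

lemma is_minor_refl: "is_minor G G"
  unfolding is_minor_def using graph_iso_refl by blast

lemma is_minor_delete_edge:
  assumes "is_minor G H" "e \<in> edges G"
  shows "is_minor (delete_edge G e) H"
proof -
  obtain H' fv fe where st: "minor_step\<^sup>*\<^sup>* H H'"
    and iso: "bij_betw fv (verts H') (verts G)" "bij_betw fe (edges H') (edges G)"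
      "\<forall>h\<in>edges H'. ends G (fe h) = fv ` ends H' h"
    using assms(1) unfolding is_minor_def graph_iso_def by blast
  obtain e' where e': "e' \<in> edges H'" "fe e' = e"
    using iso(2) assms(2) by (metis bij_betw_imp_surj_on imageE)
  have "bij_betw fe (edges H' - {e'}) (edges G - {e})"
    using bij_betw_DiffI[OF iso(2), of "{e'}" "{e}"] e' assms(2) by simp
  then have "graph_iso (delete_edge H' e') (delete_edge G e)"
    unfolding graph_iso_def delete_edge_def using iso(1,3) by (intro exI[of _ fv] exI[of _ fe]) auto
  moreover have "minor_step\<^sup>*\<^sup>* H (delete_edge H' e')"
    using st minor_step.del_edge[OF e'(1)] by simp
  ultimately show ?thesis unfolding is_minor_def by blast
qed

lemma graph_iso_add_parallel_edge:
  assumes iso: "bij_betw fv (verts H) (verts G)" "bij_betw fe (edges H) (edges G - {e})"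
      "\<forall>h\<in>edges H. ends G (fe h) = fv ` ends H h"
    and e: "e \<in> edges G" and f: "f \<notin> edges H"
    and g: "g \<in> edges H" "ends G (fe g) = ends G e"
  shows "graph_iso (add_edge H f (ends H g)) G"
  unfolding graph_iso_def
proof (intro exI conjI ballI)
  show "bij_betw fv (verts (add_edge H f (ends H g))) (verts G)" using iso(1) by simp
  have "bij_betw (fe(f := e)) (edges H) (edges G - {e})"
    using iso(2) f by (subst bij_betw_cong[of _ _ fe]) auto
  then have "bij_betw (fe(f := e)) (edges H \<union> {f}) ((edges G - {e}) \<union> {e})"
    using f notIn_Un_bij_betw3[of f "edges H" "fe(f := e)" "edges G - {e}"] by simp
  then show "bij_betw (fe(f := e)) (edges (add_edge H f (ends H g))) (edges G)"
    using e by (simp add: insert_absorb)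
next
  fix h assume "h \<in> edges (add_edge H f (ends H g))"
  then show "ends G ((fe(f := e)) h) = fv ` ends (add_edge H f (ends H g)) h"
    using iso(3) g by (cases "h = f") auto
qed

lemma obtain_two_parallel_preimages:
  assumes fe: "bij_betw fe E (edges G - {e})" and fin: "finite (edges G)" and e: "e \<in> edges G"
    and three: "card {e' \<in> edges G. ends G e' = ends G e} \<ge> 3"
  obtains g1 g2 where "g1 \<in> E" "g2 \<in> E" "g1 \<noteq> g2"
    "ends G (fe g1) = ends G e" "ends G (fe g2) = ends G e"
proof -
  define A where "A = {e' \<in> edges G - {e}. ends G e' = ends G e}"
  have "A = {e' \<in> edges G. ends G e' = ends G e} - {e}" unfolding A_def by auto
  then have "card A \<ge> 2" using three fin e by simp
  then have "\<not> card A \<le> Suc 0" by simp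
  moreover have "finite A" using fin unfolding A_def by simp
  ultimately obtain a1 a2 where a: "a1 \<in> A" "a2 \<in> A" "a1 \<noteq> a2"
    using card_le_Suc0_iff_eq by blast
  then obtain g1 g2 where "g1 \<in> E" "fe g1 = a1" "g2 \<in> E" "fe g2 = a2"
    using fe unfolding A_def bij_betw_def by (metis (no_types, lifting) imageE mem_Collect_eq)
  with a show ?thesis using that unfolding A_def by blast
qed

lemma restore_parallel_edge:
  assumes G: "wf_graph G" "e \<in> edges G" "card {e' \<in> edges G. ends G e' = ends G e} \<ge> 3"
    and H: "wf_graph H" "is_minor (delete_edge G e) H"
  shows "\<exists>H2. wf_graph H2 \<and> is_minor G H2 \<and> sp H2 \<le> sp H"
proof -
  have wf: "ends_wf H" using H(1) by (rule wf_graph_imp_ends_wf)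
  obtain H' fv fe where st: "minor_step\<^sup>*\<^sup>* H H'"
    and iso: "bij_betw fv (verts H') (verts G)" "bij_betw fe (edges H') (edges G - {e})"
      "\<forall>h\<in>edges H'. ends G (fe h) = fv ` ends H' h"
    using H(2) unfolding is_minor_def graph_iso_def delete_edge_def by auto
  obtain \<pi> where t: "tracks H H' \<pi>" using minor_steps_tracks[OF st wf] by blast
  obtain g1 g2 where g: "g1 \<in> edges H'" "g2 \<in> edges H'" "g1 \<noteq> g2"
    "ends G (fe g1) = ends G e" "ends G (fe g2) = ends G e"
    using obtain_two_parallel_preimages[OF iso(2) _ G(2,3)] G(1) unfolding wf_graph_def by blast
  have g_ends: "ends H' g \<subseteq> verts H'" "card (ends H' g) = 2" if "g \<in> edges H'" for g
    using tracksD(1)[OF t] that unfolding ends_wf_def by auto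
  have "fv ` ends H' g1 = fv ` ends H' g2" using iso(3) g by auto
  then have same: "ends H' g1 = ends H' g2"
    using g_ends g(1,2) iso(1) inj_on_image_eq_iff unfolding bij_betw_def by metis
  obtain s t vs es where usp: "unique_shortest_path_between H s t vs es" "length vs = usp H"
    using usp_attained H(1) unfolding wf_graph_def by blast
  obtain f where f: "f \<notin> edges H"
    using ex_new_if_finite[OF infinite_UNIV_nat] H(1) unfolding wf_graph_def by blast
  then obtain S where S: "S \<subseteq> verts H" "card S = 2" "\<pi> ` S = ends H' g1"
    and longer: "paths_through_longer (add_edge H f S) f s t (length es)"
    using exists_lifted_parallel_edge[OF wf t usp(1) f g(1-3) same] by blast
  have "graph_iso (add_edge H' f (ends H' g1)) G"
    using graph_iso_add_parallel_edge[OF iso G(2) _ g(1,4)] f tracksD(3)[OF t] by blast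
  moreover have "minor_step\<^sup>*\<^sup>* (add_edge H f S) (add_edge H' f (ends H' g1))"
    using tracksD(6)[OF t f S(1)] S(3) g_ends[OF g(1)] by simp
  ultimately have "is_minor G (add_edge H f S)" unfolding is_minor_def by blast
  moreover have "wf_graph (add_edge H f S)" using H(1) S unfolding wf_graph_def by auto
  moreover have "sp (add_edge H f S) \<le> sp H"
    using unique_shortest_path_between_add_edge[OF usp(1) f longer] usp(2) H(1)
    by (intro sp_add_edge_le) (auto simp: wf_graph_def unique_shortest_path_iff)
  ultimately show ?thesis by blast
qed

lemma wf_graph_delete_edge: "wf_graph G \<Longrightarrow> wf_graph (delete_edge G e)"
  unfolding wf_graph_def delete_edge_def by auto

lemma sp_floor_le: "wf_graph H \<Longrightarrow> is_minor G H \<Longrightarrow> sp_floor G \<le> sp H"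
  unfolding sp_floor_def by (rule cInf_lower) auto

lemma sp_floor_attained:
  assumes "wf_graph G"
  obtains H where "wf_graph H" "is_minor G H" "sp H = sp_floor G"
proof -
  have "sp G \<in> {sp H | H. wf_graph H \<and> is_minor G H}" using assms is_minor_refl by blast
  then have "sp_floor G \<in> {sp H | H. wf_graph H \<and> is_minor G H}"
    unfolding sp_floor_def by (intro Inf_nat_def1) blast
  then show ?thesis using that by auto
qed

theorem lemma6p9:
  assumes "wf_graph G"
    and "card {e' \<in> edges G. ends G e' = {v, w}} \<ge> 3"
    and "e \<in> edges G" and "ends G e = {v, w}"
  shows "sp_floor (delete_edge G e) = sp_floor G"
proof (rule antisym)
  obtain H where "wf_graph H" "is_minor G H" "sp H = sp_floor G"
    using sp_floor_attained[OF assms(1)] .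
  then show "sp_floor (delete_edge G e) \<le> sp_floor G"
    using sp_floor_le is_minor_delete_edge assms(3) by metis
next
  obtain H where H: "wf_graph H" "is_minor (delete_edge G e) H" "sp H = sp_floor (delete_edge G e)"
    using sp_floor_attained[OF wf_graph_delete_edge[OF assms(1)]] .
  moreover have "card {e' \<in> edges G. ends G e' = ends G e} \<ge> 3" using assms(2,4) by simp
  ultimately obtain H2 where "wf_graph H2" "is_minor G H2" "sp H2 \<le> sp H"
    using restore_parallel_edge[OF assms(1,3)] by blast
  then show "sp_floor G \<le> sp_floor (delete_edge G e)"
    using sp_floor_le H(3) by fastforce
qed

end
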